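(* Let $(M,\circ,\mathrm{OR})$ be a free $\mathbb{D}$-module of rank 3 with scalar product and orientation. Every real subspace $S\subset M$ all of whose nonzero elements are sliding vectors has real dimension at most 3, and the elements of $E$ are precisely the real subspaces of $M$ of real dimension 3 all of whose nonzero elements are sliding vectors.
   Context: $\mathbb{D}=\{a+\epsilon b: a,b\in\mathbb{R}\}$, $\epsilon^2=0$, $\mathfrak{Re}(a+\epsilon b)=a$, $\mathfrak{Du}(a+\epsilon b)=b$. A scalar product is a symmetric $\mathbb{D}$-bilinear $\circ:M\times M\to\mathbb{D}$ with $\mathfrak{Re}(x\circ x)\ge0$, equality iff $x\in\epsilon M$. $E$ is the set of real 3-dimensional subspaces $P\subset M$ with $\mathfrak{Du}(x\circ y)=0$ for all $x,y\in P$ and $P\cap\epsilon M=\{0\}$. A sliding vector is an element $z\in M\setminus\epsilon M$ with zero pitch, i.e. with $\mathfrak{Du}(z\circ z)=0$ (equivalently, writing $z=(a+\epsilon b)u$ with $a>0$, $b\in\mathbb{R}$, $u\circ u=1$, one has $b=0$). *)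

theory Defs
  imports Complex_Main
begin

text \<open>The ring D of dual numbers a + eps b with eps^2 = 0.\<close>

datatype dual = Dual (Re: real) (Du: real)

instantiation dual :: comm_ring_1
begin
definition "zero_dual = Dual 0 0"
definition "one_dual = Dual 1 0"
definition "plus_dual x y = Dual (Re x + Re y) (Du x + Du y)"
definition "minus_dual x y = Dual (Re x - Re y) (Du x - Du y)"
definition "uminus_dual x = Dual (- Re x) (- Du x)"
definition "times_dual x y = Dual (Re x * Re y) (Re x * Du y + Du x * Re y)"
instance
  by standard (auto simp: zero_dual_def one_dual_def plus_dual_def minus_dual_def
      uminus_dual_def times_dual_def algebra_simps intro: dual.expand)
end

definition dual_eps :: dual where "dual_eps = Dual 0 1"

definition rscale :: "(dual \<Rightarrow> 'm \<Rightarrow> 'm) \<Rightarrow> real \<Rightarrow> 'm \<Rightarrow> 'm" where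
  "rscale sc r x = sc (Dual r 0) x"

definition free_rank3_dmodule :: "(dual \<Rightarrow> 'm::ab_group_add \<Rightarrow> 'm) \<Rightarrow> bool" where
  "free_rank3_dmodule sc \<longleftrightarrow> module sc \<and>
     (\<exists>B. card B = 3 \<and> \<not> module.dependent sc B \<and> module.span sc B = UNIV)"

definition eps_part :: "(dual \<Rightarrow> 'm \<Rightarrow> 'm) \<Rightarrow> 'm set" where
  "eps_part sc = range (sc dual_eps)"

definition scalar_product :: "(dual \<Rightarrow> 'm::ab_group_add \<Rightarrow> 'm) \<Rightarrow> ('m \<Rightarrow> 'm \<Rightarrow> dual) \<Rightarrow> bool" where
  "scalar_product sc sp \<longleftrightarrow>
     (\<forall>x y. sp x y = sp y x) \<and>
     (\<forall>a b x y z. sp (sc a x + sc b y) z = a * sp x z + b * sp y z) \<and>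
     (\<forall>x. Re (sp x x) \<ge> 0) \<and>
     (\<forall>x. Re (sp x x) = 0 \<longleftrightarrow> x \<in> eps_part sc)"

definition real_subspace :: "(dual \<Rightarrow> 'm::ab_group_add \<Rightarrow> 'm) \<Rightarrow> 'm set \<Rightarrow> bool" where
  "real_subspace sc S \<longleftrightarrow> module.subspace (rscale sc) S"

definition real_dim :: "(dual \<Rightarrow> 'm::ab_group_add \<Rightarrow> 'm) \<Rightarrow> 'm set \<Rightarrow> nat" where
  "real_dim sc S = vector_space.dim (rscale sc) S"

definition sliding_vector :: "(dual \<Rightarrow> 'm \<Rightarrow> 'm) \<Rightarrow> ('m \<Rightarrow> 'm \<Rightarrow> dual) \<Rightarrow> 'm \<Rightarrow> bool" where
  "sliding_vector sc sp z \<longleftrightarrow> z \<notin> eps_part sc \<and> Du (sp z z) = 0"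

definition E_set :: "(dual \<Rightarrow> 'm::ab_group_add \<Rightarrow> 'm) \<Rightarrow> ('m \<Rightarrow> 'm \<Rightarrow> dual) \<Rightarrow> 'm set set" where
  "E_set sc sp = {P. real_subspace sc P \<and> real_dim sc P = 3 \<and>
      (\<forall>x\<in>P. \<forall>y\<in>P. Du (sp x y) = 0) \<and> P \<inter> eps_part sc = {0}}"

end

theory Submission
  imports Defs
begin

text \<open>Multiplication by \<open>\<epsilon>\<close> is a real-linear map \<open>M \<rightarrow> \<epsilon>M\<close> whose kernel, for a free module, is
  exactly \<open>\<epsilon>M\<close>. A real subspace \<open>S\<close> with \<open>S \<inter> \<epsilon>M = {0}\<close> is therefore mapped injectively into
  \<open>\<epsilon>M\<close>, which is spanned over \<open>\<real>\<close> by \<open>\<epsilon>b\<^sub>1, \<epsilon>b\<^sub>2, \<epsilon>b\<^sub>3\<close>; hence \<open>dim S \<le> 3\<close>.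
  A subspace all of whose nonzero elements are sliding vectors meets \<open>\<epsilon>M\<close> only in \<open>0\<close>, and by
  polarization the pitch \<open>Du(z \<circ> z)\<close> vanishes on \<open>S\<close> iff \<open>Du(x \<circ> y)\<close> vanishes on \<open>S \<times> S\<close>;
  this identifies \<open>E\<close> with the 3-dimensional such subspaces.\<close>

lemma Re_plus [simp]: "Re (x + y) = Re x + Re y"
  and Du_plus [simp]: "Du (x + y) = Du x + Du y"
  by (simp_all add: plus_dual_def)

lemma Re_times [simp]: "Re (x * y) = Re x * Re y"
  and Du_times [simp]: "Du (x * y) = Re x * Du y + Du x * Re y"
  by (simp_all add: times_dual_def)

lemma Dual_plus [simp]: "Dual a b + Dual c d = Dual (a + c) (b + d)"
  by (simp add: plus_dual_def)

lemma Dual_times [simp]: "Dual a b * Dual c d = Dual (a * c) (a * d + b * c)"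
  by (simp add: times_dual_def)

lemma Re_zero [simp]: "Re 0 = 0" and Du_zero [simp]: "Du 0 = 0"
  by (simp_all add: zero_dual_def)

lemma Re_dual_eps [simp]: "Re dual_eps = 0" and Du_dual_eps [simp]: "Du dual_eps = 1"
  by (simp_all add: dual_eps_def)

lemma dual_eq_iff: "x = y \<longleftrightarrow> Re x = Re y \<and> Du x = Du y" for x y :: dual
  by (auto intro: dual.expand)

lemma dual_eps_times_eq_0_iff: "dual_eps * d = 0 \<longleftrightarrow> Re d = 0"
  by (simp add: dual_eq_iff)

lemma dual_eq_eps_times: "Re d = 0 \<Longrightarrow> d = dual_eps * Dual (Du d) 0"
  by (simp add: dual_eq_iff)

lemma dual_eps_times_eq: "dual_eps * d = Dual (Re d) 0 * dual_eps"
  by (simp add: dual_eq_iff)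

locale dual_module = module sc for sc :: "dual \<Rightarrow> 'm::ab_group_add \<Rightarrow> 'm"
begin

sublocale R: vector_space "rscale sc"
  by unfold_locales
    (simp_all add: rscale_def scale_right_distrib scale_left_distrib[symmetric] one_dual_def[symmetric])

lemma rscale_scale: "rscale sc r (sc d x) = sc (Dual r 0 * d) x"
  by (simp add: rscale_def)

lemma linear_scale_eps: "Vector_Spaces.linear (rscale sc) (rscale sc) (sc dual_eps)"
  by (simp add: Vector_Spaces.linear_iff R.vector_space_axioms scale_right_distrib rscale_def mult.commute)

lemma zero_in_eps_part: "0 \<in> eps_part sc"
  unfolding eps_part_def by (metis rangeI scale_zero_right)

context
  fixes B :: "'m set"
  assumes finite_B: "finite B" and independent_B: "independent B" and span_B: "span B = UNIV"
begin

lemma basis_coordinates: obtains u where "x = (\<Sum>b\<in>B. sc (u b) b)"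
proof -
  have "x \<in> range (\<lambda>u. \<Sum>b\<in>B. sc (u b) b)"
    using span_B span_finite[OF finite_B] by blast
  then show ?thesis using that by blast
qed

lemma eps_part_subset_real_span: "eps_part sc \<subseteq> R.span (sc dual_eps ` B)"
proof
  fix y assume "y \<in> eps_part sc"
  then obtain x where y: "y = sc dual_eps x" by (auto simp: eps_part_def)
  obtain u where "x = (\<Sum>b\<in>B. sc (u b) b)" by (rule basis_coordinates)
  then have "y = (\<Sum>b\<in>B. rscale sc (Re (u b)) (sc dual_eps b))"
    by (simp add: y scale_sum_right rscale_scale dual_eps_times_eq)
  then show "y \<in> R.span (sc dual_eps ` B)"
    by (simp add: R.span_sum R.span_scale R.span_base)
qed

lemma scale_eps_eq_0_imp_eps_part:
  assumes "sc dual_eps x = 0" shows "x \<in> eps_part sc"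
proof -
  obtain u where x: "x = (\<Sum>b\<in>B. sc (u b) b)" by (rule basis_coordinates)
  with assms have "(\<Sum>b\<in>B. sc (dual_eps * u b) b) = 0"
    by (simp add: scale_sum_right)
  with independent_B have "\<forall>b\<in>B. dual_eps * u b = 0"
    unfolding dependent_finite[OF finite_B] by (auto dest: spec[of _ "\<lambda>b. dual_eps * u b"])
  then have "x = (\<Sum>b\<in>B. sc (dual_eps * Dual (Du (u b)) 0) b)"
    unfolding x dual_eps_times_eq_0_iff by (intro sum.cong refl) (simp flip: dual_eq_eps_times)
  also have "\<dots> = sc dual_eps (\<Sum>b\<in>B. sc (Dual (Du (u b)) 0) b)"
    by (simp add: scale_sum_right)
  finally show ?thesis by (simp add: eps_part_def)
qed

lemma real_dim_le_rank_if_inter_eps_part: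
  assumes S: "R.subspace S" and inter: "S \<inter> eps_part sc = {0}"
  shows "R.dim S \<le> card B"
proof -
  interpret eps: Vector_Spaces.linear "rscale sc" "rscale sc" "sc dual_eps"
    by (rule linear_scale_eps)
  obtain A where A: "A \<subseteq> S" "R.independent A" "S \<subseteq> R.span A" "card A = R.dim S"
    by (rule R.basis_exists)
  have "inj_on (sc dual_eps) S"
    unfolding eps.inj_on_iff_eq_0[OF S] using inter scale_eps_eq_0_imp_eps_part by blast
  moreover have "R.span A \<subseteq> S" using A(1) S by (rule R.span_minimal)
  ultimately have inj: "inj_on (sc dual_eps) (R.span A)" by (rule inj_on_subset)
  have "R.independent (sc dual_eps ` A)"
    using A(2) inj by (rule eps.independent_injective_image)
  moreover have "sc dual_eps ` A \<subseteq> R.span (sc dual_eps ` B)"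
    using eps_part_subset_real_span by (auto simp: eps_part_def)
  ultimately have "card (sc dual_eps ` A) \<le> card (sc dual_eps ` B)"
    using R.independent_span_bound finite_B by blast
  also have "\<dots> \<le> card B" using finite_B by (rule card_image_le)
  finally have "card (sc dual_eps ` A) \<le> card B" .
  moreover have "card (sc dual_eps ` A) = card A"
    using inj R.span_superset by (intro card_image) (rule inj_on_subset)
  ultimately show ?thesis using A(4) by simp
qed

end

lemma free_rank3_real_dim_le:
  assumes "free_rank3_dmodule sc" "R.subspace S" "S \<inter> eps_part sc = {0}"
  shows "R.dim S \<le> 3"
proof -
  obtain B where B: "card B = 3" "independent B" "span B = UNIV"
    using assms(1) by (auto simp: free_rank3_dmodule_def)
  then have "finite B" by (intro card_ge_0_finite) simp
  with B assms(2,3) show ?thesis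
    using real_dim_le_rank_if_inter_eps_part by fastforce
qed

end

locale dual_module_scalar_product = dual_module sc
  for sc :: "dual \<Rightarrow> 'm::ab_group_add \<Rightarrow> 'm" +
  fixes sp :: "'m \<Rightarrow> 'm \<Rightarrow> dual"
  assumes scalar_product: "scalar_product sc sp"
begin

lemma sp_commute: "sp x y = sp y x"
  using scalar_product unfolding scalar_product_def by blast

lemma sp_linear_left: "sp (sc a x + sc b y) z = a * sp x z + b * sp y z"
  using scalar_product unfolding scalar_product_def by blast

lemma sp_add_left: "sp (x + y) z = sp x z + sp y z"
  using sp_linear_left[of 1 x 1 y z] by simp

lemma sp_zero_left: "sp 0 z = 0"
  using sp_linear_left[of 0 0 0 0 z] by simp

lemma Du_sp_eq_0_if_Du_sp_self_eq_0:
  assumes S: "R.subspace S" and pitch: "\<forall>z\<in>S. Du (sp z z) = 0" and x: "x \<in> S" and y: "y \<in> S"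
  shows "Du (sp x y) = 0"
proof -
  have "x + y \<in> S" using S x y by (rule R.subspace_add)
  then have "0 = Du (sp (x + y) (x + y))" using pitch by simp
  also have "\<dots> = Du (sp x x + sp y x + (sp x y + sp y y))"
    by (simp only: sp_add_left sp_commute[of x "x + y"] sp_commute[of y "x + y"])
  also have "\<dots> = Du (sp x x) + Du (sp y x) + (Du (sp x y) + Du (sp y y))"
    by (simp only: Du_plus)
  also have "\<dots> = 2 * Du (sp x y)" using pitch x y sp_commute[of y x] by simp
  finally show ?thesis by simp
qed

lemma sliding_subspace_iff:
  assumes S: "R.subspace S"
  shows "(\<forall>z\<in>S. z \<noteq> 0 \<longrightarrow> sliding_vector sc sp z) \<longleftrightarrow>
    (\<forall>x\<in>S. \<forall>y\<in>S. Du (sp x y) = 0) \<and> S \<inter> eps_part sc = {0}"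
proof
  assume sliding: "\<forall>z\<in>S. z \<noteq> 0 \<longrightarrow> sliding_vector sc sp z"
  then have "\<forall>z\<in>S. Du (sp z z) = 0"
    using sp_zero_left[of 0] by (auto simp: sliding_vector_def)
  then have "\<forall>x\<in>S. \<forall>y\<in>S. Du (sp x y) = 0"
    using Du_sp_eq_0_if_Du_sp_self_eq_0[OF S] by blast
  moreover have "S \<inter> eps_part sc = {0}"
    using sliding R.subspace_0[OF S] zero_in_eps_part by (auto simp: sliding_vector_def)
  ultimately show "(\<forall>x\<in>S. \<forall>y\<in>S. Du (sp x y) = 0) \<and> S \<inter> eps_part sc = {0}" ..
qed (auto simp: sliding_vector_def)

end

theorem proposition6:
  fixes sc :: "dual \<Rightarrow> 'm::ab_group_add \<Rightarrow> 'm" and sp :: "'m \<Rightarrow> 'm \<Rightarrow> dual"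
  assumes "free_rank3_dmodule sc"
    and "scalar_product sc sp"
  shows "(\<forall>S. real_subspace sc S \<and> (\<forall>z\<in>S. z \<noteq> 0 \<longrightarrow> sliding_vector sc sp z)
              \<longrightarrow> real_dim sc S \<le> 3)
         \<and> E_set sc sp = {S. real_subspace sc S \<and> real_dim sc S = 3 \<and>
              (\<forall>z\<in>S. z \<noteq> 0 \<longrightarrow> sliding_vector sc sp z)}"
proof -
  interpret dual_module_scalar_product sc sp
    using assms by (simp add: dual_module_scalar_product_def dual_module_def free_rank3_dmodule_def
      dual_module_scalar_product_axioms_def)
  have "real_dim sc S \<le> 3"
    if "real_subspace sc S" "\<forall>z\<in>S. z \<noteq> 0 \<longrightarrow> sliding_vector sc sp z" for S
    using that free_rank3_real_dim_le[OF assms(1)]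
    by (simp add: real_subspace_def real_dim_def sliding_subspace_iff)
  moreover have "S \<in> E_set sc sp \<longleftrightarrow> real_subspace sc S \<and> real_dim sc S = 3 \<and>
      (\<forall>z\<in>S. z \<noteq> 0 \<longrightarrow> sliding_vector sc sp z)" for S
    by (cases "real_subspace sc S") (simp_all add: E_set_def real_subspace_def sliding_subspace_iff)
  ultimately show ?thesis by blast
qed

end
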